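(* Let $M=(\mathcal S,\mathcal A,\bar r_t,p_t,s_1)$ be a possibly non-time-homogeneous MDP (mean rewards $\bar r_t$ and transition probabilities $p_t$ depending on the step $t$) and $M'=(\mathcal S,\mathcal A,\bar r',p',s_1)$ a time-homogeneous communicating MDP on the same finite state and action sets, with optimal stationary policy $\pi'^*$. Suppose that for all $t=1,\dots,T$ and all states $s$, \[|\bar r_t(s,\pi'^*(s))-\bar r'(s,\pi'^*(s))|\le\Delta^r_t(s),\qquad \|p_t(\cdot\mid s,\pi'^*(s))-p'(\cdot\mid s,\pi'^*(s))\|_1\le\Delta^p_t(s).\] If $\pi'^*$ is performed on $M$ for $T$ steps and $s_t$ denotes the state visited at step $t$, then \[T\rho^*(M')-\sum_{t=1}^T\bar r_t(s_t,\pi'^*(s_t))\le\sum_{t=1}^T\big(\Lambda'\Delta^p_t(s_t)+\Delta^r_t(s_t)\big)+\sum_{t=1}^T\Big(\sum_{s'}p_t(s'\mid s_t,\pi'^*(s_t))\,\lambda'(s')-\lambda'(s_t)\Big),\] where $\lambda'$ is the bias function and $\Lambda'=\max_s\lambda'(s)-\min_s\lambda'(s)$ the bias span of $\pi'^*$ on $M'$.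
   Context: A communicating MDP is one in which for any two states $s,s'$, starting in $s$ one can reach $s'$ with positive probability by choosing appropriate actions. For a stationary policy $\pi$, $\rho(M',\pi)=\lim_{n\to\infty}\frac1n\mathbb E[\sum_{t=1}^nr_t]$ and $\rho^*(M')=\max_\pi\rho(M',\pi)$; $\pi'^*$ attains $\rho^*(M')$. The bias function $\lambda'$ of $\pi'^*$ on $M'$ satisfies the Poisson equation $\rho^*(M')-\bar r'(s,\pi'^*(s))=\sum_{s'}p'(s'\mid s,\pi'^*(s))\lambda'(s')-\lambda'(s)$ for all $s$. *)

theory Defs
  imports "HOL-Analysis.Analysis"
begin

text \<open>States of type 's, actions of type 'a (both finite; every action
  available in every state). A time-homogeneous MDP is given by mean rewards
  r :: 's => 'a => real and transition probabilities p :: 's => 'a => 's => real,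
  where p s a s' is the probability of moving to s' when playing a in s.\<close>

definition is_kernel :: "('s::finite \<Rightarrow> 'a \<Rightarrow> 's \<Rightarrow> real) \<Rightarrow> bool" where
  "is_kernel p \<longleftrightarrow> (\<forall>s a s'. 0 \<le> p s a s') \<and> (\<forall>s a. (\<Sum>s'\<in>UNIV. p s a s') = 1)"

definition communicating :: "('s \<Rightarrow> 'a \<Rightarrow> 's \<Rightarrow> real) \<Rightarrow> bool" where
  "communicating p \<longleftrightarrow> (\<forall>s s'. (s, s') \<in> {(x, y). \<exists>a. p x a y > 0}\<^sup>*)"

fun state_dist :: "('s::finite \<Rightarrow> 'a \<Rightarrow> 's \<Rightarrow> real) \<Rightarrow> 's \<Rightarrow> ('s \<Rightarrow> 'a) \<Rightarrow> nat \<Rightarrow> 's \<Rightarrow> real" where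
  "state_dist p s1 pol 0 = (\<lambda>s. if s = s1 then 1 else 0)"
| "state_dist p s1 pol (Suc n) = (\<lambda>s'. \<Sum>s\<in>UNIV. state_dist p s1 pol n s * p s (pol s) s')"

text \<open>Expected reward at step t (t = 1,2,...) is that of step index t-1 here.\<close>
definition exp_reward :: "('s::finite \<Rightarrow> 'a \<Rightarrow> real) \<Rightarrow> ('s \<Rightarrow> 'a \<Rightarrow> 's \<Rightarrow> real) \<Rightarrow> 's \<Rightarrow> ('s \<Rightarrow> 'a) \<Rightarrow> nat \<Rightarrow> real" where
  "exp_reward r p s1 pol n = (\<Sum>s\<in>UNIV. state_dist p s1 pol n s * r s (pol s))"

definition avg_reward :: "('s::finite \<Rightarrow> 'a \<Rightarrow> real) \<Rightarrow> ('s \<Rightarrow> 'a \<Rightarrow> 's \<Rightarrow> real) \<Rightarrow> 's \<Rightarrow> ('s \<Rightarrow> 'a) \<Rightarrow> real" where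
  "avg_reward r p s1 pol = lim (\<lambda>n. (\<Sum>t<n. exp_reward r p s1 pol t) / real n)"

definition opt_avg_reward :: "('s::finite \<Rightarrow> 'a::finite \<Rightarrow> real) \<Rightarrow> ('s \<Rightarrow> 'a \<Rightarrow> 's \<Rightarrow> real) \<Rightarrow> 's \<Rightarrow> real" where
  "opt_avg_reward r p s1 = Max (range (avg_reward r p s1))"

definition span :: "('s::finite \<Rightarrow> real) \<Rightarrow> real" where
  "span f = Max (range f) - Min (range f)"

end

theory Submission
  imports Defs
begin

text \<open>At each step the optimal gain exceeds the reward of M by at most the reward
  deviation plus the gain deficit of M' in that state; the Poisson equation rewrites the
  latter as the expected bias increment under p', which differs from the increment under
  the actual kernel p_t by at most the bias span times the L1 distance of the two
  transition rows. Summing over the T visited states gives the bound.\<close>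

lemma span_nonneg: "0 \<le> span (f :: 's::finite \<Rightarrow> real)"
proof -
  have "Min (range f) \<le> f x" "f x \<le> Max (range f)" for x
    by auto
  then show ?thesis
    unfolding span_def by (meson diff_ge_0_iff_ge order_trans)
qed

lemma expectation_diff_le_span_l1:
  fixes q q' f :: "'s::finite \<Rightarrow> real"
  assumes "(\<Sum>s\<in>UNIV. q s) = 1" "(\<Sum>s\<in>UNIV. q' s) = 1"
  shows "(\<Sum>s\<in>UNIV. q' s * f s) - (\<Sum>s\<in>UNIV. q s * f s)
         \<le> span f * (\<Sum>s\<in>UNIV. \<bar>q s - q' s\<bar>)"
proof -
  define c where "c = Min (range f)"
  have shifted: "0 \<le> f s - c" "f s - c \<le> span f" for s
    unfolding c_def span_def by auto
  \<comment> \<open>Both rows have mass 1, so shifting f by its minimum does not change the difference.\<close>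
  have "(\<Sum>s\<in>UNIV. q' s * f s) - (\<Sum>s\<in>UNIV. q s * f s)
      = (\<Sum>s\<in>UNIV. (q' s - q s) * (f s - c)) + c * ((\<Sum>s\<in>UNIV. q' s) - (\<Sum>s\<in>UNIV. q s))"
    by (simp add: algebra_simps sum_subtractf sum_distrib_left sum.distrib)
  also have "\<dots> = (\<Sum>s\<in>UNIV. (q' s - q s) * (f s - c))"
    using assms by simp
  also have "\<dots> \<le> (\<Sum>s\<in>UNIV. \<bar>q s - q' s\<bar> * span f)"
  proof (rule sum_mono)
    fix s
    have "(q' s - q s) * (f s - c) \<le> \<bar>q' s - q s\<bar> * (f s - c)"
      using shifted(1) by (intro mult_right_mono) auto
    also have "\<dots> \<le> \<bar>q s - q' s\<bar> * span f"
      using shifted by (simp add: abs_minus_commute mult_left_mono)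
    finally show "(q' s - q s) * (f s - c) \<le> \<bar>q s - q' s\<bar> * span f" .
  qed
  also have "\<dots> = span f * (\<Sum>s\<in>UNIV. \<bar>q s - q' s\<bar>)"
    by (simp add: sum_distrib_left mult.commute)
  finally show ?thesis .
qed

lemma gain_minus_reward_le:
  fixes q q' lam :: "'s::finite \<Rightarrow> real"
  assumes "(\<Sum>s\<in>UNIV. q s) = 1" "(\<Sum>s\<in>UNIV. q' s) = 1"
    and poisson: "g - r' = (\<Sum>s\<in>UNIV. q' s * lam s) - b"
    and "\<bar>r - r'\<bar> \<le> dr"
    and "(\<Sum>s\<in>UNIV. \<bar>q s - q' s\<bar>) \<le> dp"
  shows "g - r \<le> (span lam * dp + dr) + ((\<Sum>s\<in>UNIV. q s * lam s) - b)"
proof -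
  have "(\<Sum>s\<in>UNIV. q' s * lam s) - (\<Sum>s\<in>UNIV. q s * lam s) \<le> span lam * dp"
    using expectation_diff_le_span_l1[OF assms(1,2), of lam] assms(5) span_nonneg[of lam]
    by (meson mult_left_mono order_trans)
  then show ?thesis
    using poisson assms(4) by linarith
qed

theorem lemma2:
  fixes r :: "nat \<Rightarrow> 's::finite \<Rightarrow> 'a::finite \<Rightarrow> real"
    and p :: "nat \<Rightarrow> 's \<Rightarrow> 'a \<Rightarrow> 's \<Rightarrow> real"
    and r' :: "'s \<Rightarrow> 'a \<Rightarrow> real"
    and p' :: "'s \<Rightarrow> 'a \<Rightarrow> 's \<Rightarrow> real"
    and s1 :: 's
    and pi' :: "'s \<Rightarrow> 'a"
    and lam' :: "'s \<Rightarrow> real"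
    and Dr Dp :: "nat \<Rightarrow> 's \<Rightarrow> real"
    and T :: nat
    and st :: "nat \<Rightarrow> 's"
  assumes kern: "\<And>t. is_kernel (p t)"
    and kern': "is_kernel p'"
    and comm: "communicating p'"
    and opt: "avg_reward r' p' s1 pi' = opt_avg_reward r' p' s1"
    and poisson: "\<And>s. opt_avg_reward r' p' s1 - r' s (pi' s)
                     = (\<Sum>s'\<in>UNIV. p' s (pi' s) s' * lam' s') - lam' s"
    and dr: "\<And>t s. 1 \<le> t \<Longrightarrow> t \<le> T \<Longrightarrow> \<bar>r t s (pi' s) - r' s (pi' s)\<bar> \<le> Dr t s"
    and dp: "\<And>t s. 1 \<le> t \<Longrightarrow> t \<le> T \<Longrightarrow>
               (\<Sum>s'\<in>UNIV. \<bar>p t s (pi' s) s' - p' s (pi' s) s'\<bar>) \<le> Dp t s"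
    and start: "st 1 = s1"
    and path: "\<And>t. 1 \<le> t \<Longrightarrow> t < T \<Longrightarrow> p t (st t) (pi' (st t)) (st (Suc t)) > 0"
  shows "real T * opt_avg_reward r' p' s1 - (\<Sum>t=1..T. r t (st t) (pi' (st t)))
         \<le> (\<Sum>t=1..T. span lam' * Dp t (st t) + Dr t (st t))
           + (\<Sum>t=1..T. (\<Sum>s'\<in>UNIV. p t (st t) (pi' (st t)) s' * lam' s') - lam' (st t))"
proof -
  let ?rho = "opt_avg_reward r' p' s1"
  have "real T * ?rho - (\<Sum>t=1..T. r t (st t) (pi' (st t)))
      = (\<Sum>t=1..T. ?rho - r t (st t) (pi' (st t)))"
    by (simp add: sum_subtractf)
  also have "\<dots> \<le> (\<Sum>t=1..T. (span lam' * Dp t (st t) + Dr t (st t))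
        + ((\<Sum>s'\<in>UNIV. p t (st t) (pi' (st t)) s' * lam' s') - lam' (st t)))"
  proof (rule sum_mono)
    fix t assume "t \<in> {1..T}"
    then have t: "1 \<le> t" "t \<le> T" by auto
    show "?rho - r t (st t) (pi' (st t))
        \<le> (span lam' * Dp t (st t) + Dr t (st t))
          + ((\<Sum>s'\<in>UNIV. p t (st t) (pi' (st t)) s' * lam' s') - lam' (st t))"
      using kern[of t] kern' unfolding is_kernel_def
      by (intro gain_minus_reward_le[OF _ _ poisson dr[OF t] dp[OF t]]) auto
  qed
  also have "\<dots> = (\<Sum>t=1..T. span lam' * Dp t (st t) + Dr t (st t))
      + (\<Sum>t=1..T. (\<Sum>s'\<in>UNIV. p t (st t) (pi' (st t)) s' * lam' s') - lam' (st t))"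
    by (rule sum.distrib)
  finally show ?thesis .
qed

end
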